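(* For every integer $k\geq 3$, there is a deterministic distributed dynamic data structure for $k$-clique membership listing which handles edge insertions and deletions in $O(1)$ amortized rounds.
   Context: Highly dynamic network model: a synchronous network on a fixed set $V$ of $n$ nodes with unique identifiers starts as the empty graph; at the beginning of round $i$ the graph is $G_i=(V,E_i)$, obtained from the previous graph by an adversary inserting and/or deleting an arbitrary (unbounded) set of edges. At the start of each round every node is notified only of the insertions/deletions of edges incident to it; then each node may send a message of $O(\log n)$ bits to each of its current neighbors. A distributed dynamic data structure consists of a local part $DS_v$ at each node $v$; at the end of every round, $DS_v$ may be queried and must answer immediately, without any further communication, either with a correct answer to the query or with $\texttt{inconsistent}$. The amortized round complexity is at most $c$ if for every round $i$, the number of rounds up to round $i$ in which at least one node $v$ has $DS_v$ in an inconsistent state, divided by the total number of topology changes that occurred up to round $i$, is at most $c$. $k$-clique membership listing: $DS_v$ at each node $v$ must respond at the end of round $i$ to a query consisting of a $k$-element node set $\{v_1,\dots,v_k\}$ containing $v$ with $\texttt{true}$ if it forms a $k$-clique in $G_i$, $\texttt{false}$ if it does not, or $\texttt{inconsistent}$. *)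

theory Defs
  imports Complex_Main
begin

text \<open>Model of the highly dynamic synchronous network on nodes V = {0..<n}
 (node identifiers are the numbers 0..n-1).
 A topology sequence E assigns to each round i the edge set E i of G_i; E 0 is the
 initial empty graph, round i (i >= 1) starts with graph E i.\<close>

definition valid_topology :: "nat \<Rightarrow> (nat \<Rightarrow> nat set set) \<Rightarrow> bool" where
  "valid_topology n E \<longleftrightarrow> E 0 = {} \<and>
     (\<forall>i. E i \<subseteq> {{u, v} | u v. u < n \<and> v < n \<and> u \<noteq> v})"

definition notif :: "(nat \<Rightarrow> nat set set) \<Rightarrow> nat \<Rightarrow> nat \<Rightarrow> nat set \<times> nat set" where
  "notif E i v = ({u. {u, v} \<in> E i - E (i - 1)}, {u. {u, v} \<in> E (i - 1) - E i})"

text \<open>The local state DS_v is a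
 value of type nat list (any finite local information can be encoded).  init v is the
 initial state of node v (it may depend on v's identifier); send_msg s nt u is the message
 (a bit string) sent to neighbour u given the local state s and the notification nt;
 update s nt rcv is the new local state given the messages received (rcv u = None iff u is not
 a current neighbour); answer s Q answers the query Q: Some b = true/false, None = inconsistent.\<close>
record alg =
  init :: "nat \<Rightarrow> nat list"
  send_msg :: "nat list \<Rightarrow> nat set \<times> nat set \<Rightarrow> nat \<Rightarrow> bool list"
  update :: "nat list \<Rightarrow> nat set \<times> nat set \<Rightarrow> (nat \<Rightarrow> bool list option) \<Rightarrow> nat list"
  answer :: "nat list \<Rightarrow> nat set \<Rightarrow> bool option"

fun run :: "alg \<Rightarrow> nat \<Rightarrow> (nat \<Rightarrow> nat set set) \<Rightarrow> nat \<Rightarrow> nat \<Rightarrow> nat list" where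
  "run A n E 0 v = init A v"
| "run A n E (Suc i) v =
     update A (run A n E i v) (notif E (Suc i) v)
       (\<lambda>u. if u < n \<and> {u, v} \<in> E (Suc i)
            then Some (send_msg A (run A n E i u) (notif E (Suc i) u) v) else None)"

definition msg_bounded :: "nat \<Rightarrow> nat \<Rightarrow> alg \<Rightarrow> bool" where
  "msg_bounded B n A \<longleftrightarrow>
     (\<forall>s nt u. length (send_msg A s nt u) \<le> B * nat \<lceil>log 2 (real n)\<rceil>)"

definition is_clique :: "nat set set \<Rightarrow> nat set \<Rightarrow> bool" where
  "is_clique F Q \<longleftrightarrow> (\<forall>u\<in>Q. \<forall>w\<in>Q. u \<noteq> w \<longrightarrow> {u, w} \<in> F)"

definition valid_query :: "nat \<Rightarrow> nat \<Rightarrow> nat \<Rightarrow> nat set \<Rightarrow> bool" where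
  "valid_query k n v Q \<longleftrightarrow> v < n \<and> v \<in> Q \<and> Q \<subseteq> {..<n} \<and> card Q = k"

definition clique_correct :: "nat \<Rightarrow> nat \<Rightarrow> alg \<Rightarrow> bool" where
  "clique_correct k n A \<longleftrightarrow>
     (\<forall>E. valid_topology n E \<longrightarrow>
        (\<forall>i v Q b. 1 \<le> i \<longrightarrow> valid_query k n v Q \<longrightarrow>
            answer A (run A n E i v) Q = Some b \<longrightarrow> b = is_clique (E i) Q))"

definition inconsistent_round :: "nat \<Rightarrow> nat \<Rightarrow> alg \<Rightarrow> (nat \<Rightarrow> nat set set) \<Rightarrow> nat \<Rightarrow> bool" where
  "inconsistent_round k n A E i \<longleftrightarrow>
     (\<exists>v Q. valid_query k n v Q \<and> answer A (run A n E i v) Q = None)"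

definition num_changes :: "(nat \<Rightarrow> nat set set) \<Rightarrow> nat \<Rightarrow> nat" where
  "num_changes E i = (\<Sum>j\<in>{1..i}. card ((E j - E (j - 1)) \<union> (E (j - 1) - E j)))"

definition amortized_bound :: "real \<Rightarrow> nat \<Rightarrow> nat \<Rightarrow> alg \<Rightarrow> bool" where
  "amortized_bound c k n A \<longleftrightarrow>
     (\<forall>E. valid_topology n E \<longrightarrow>
        (\<forall>i. real (card {j\<in>{1..i}. inconsistent_round k n A E j})
              \<le> c * real (num_changes E i)))"

end

theory Submission
  imports Defs "HOL-Library.Countable" "HOL-Library.Log_Nat"
begin

text \<open>Every node keeps a queue of neighbours whose incident edge has changed; a change of an edge
  enters the queues of both endpoints.  In every round a node announces the least entry \<open>h\<close> of
  its queue to all its neighbours, together with whether it is adjacent to \<open>h\<close>, and it replies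
  to the announcement each neighbour made in the previous round, telling whether it is adjacent
  to the announced node.  Thus a node \<open>x\<close> learns the status of an edge \<open>uv\<close> between two of its
  neighbours from the announcements of \<open>u\<close> or \<open>v\<close>, or from the replies to its own announcement
  of \<open>u\<close> or \<open>v\<close>: its knowledge of \<open>uv\<close> can be stale only while \<open>v\<close> is queued at \<open>u\<close>, \<open>u\<close> at \<open>v\<close>,
  or \<open>u\<close> or \<open>v\<close> is queued or just announced at \<open>x\<close>.  Neighbours also report whether their queue
  is non-empty, so \<open>x\<close> can tell when all this information is current.  Every inconsistent round
  therefore pops an entry of some queue, and each topology change pushes at most two, so there
  are at most twice as many inconsistent rounds as changes.  A message carries one identifier
  and five flags, i.e.\ \<open>O(log n)\<close> bits.\<close>

section \<open>Cliques and counting\<close>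

lemma is_clique_iff_adjacent:
  assumes "x \<in> Q"
  shows "is_clique F Q \<longleftrightarrow> (\<forall>u\<in>Q - {x}. {u, x} \<in> F) \<and> is_clique F (Q - {x})"
proof -
  have "{u, w} \<in> F" if "\<forall>u\<in>Q - {x}. {u, x} \<in> F" and "is_clique F (Q - {x})"
    and "u \<in> Q" and "w \<in> Q" and "u \<noteq> w" for u w
    using that by (cases "u = x"; cases "w = x") (auto simp: is_clique_def insert_commute)
  then show ?thesis
    using assms by (auto simp: is_clique_def)
qed

lemma valid_query_card_le: "valid_query k n v Q \<Longrightarrow> k \<le> n"
  using card_mono[of "{..<n}" Q] by (auto simp: valid_query_def)

lemma card_le_by_potential:
  fixes \<Phi> d :: "nat \<Rightarrow> nat"
  assumes "\<Phi> 0 = 0" and "\<And>t. \<Phi> (Suc t) + of_bool (P (Suc t)) \<le> \<Phi> t + c * d (Suc t)"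
  shows "card {j \<in> {1..i}. P j} \<le> c * (\<Sum>j\<in>{1..i}. d j)"
proof -
  have "card {j \<in> {1..i}. P j} + \<Phi> i \<le> c * (\<Sum>j\<in>{1..i}. d j)"
  proof (induction i)
    case 0
    then show ?case using assms(1) by simp
  next
    case (Suc i)
    have "{j \<in> {1..Suc i}. P j} = {j \<in> {1..i}. P j} \<union> (if P (Suc i) then {Suc i} else {})"
      by (auto simp: le_Suc_eq)
    then have "card {j \<in> {1..Suc i}. P j} = card {j \<in> {1..i}. P j} + of_bool (P (Suc i))"
      by simp
    then show ?case
      using Suc.IH assms(2)[of i] by (simp add: distrib_left)
  qed
  then show ?thesis by simp
qed

lemma finite_incident: "finite D \<Longrightarrow> finite {u. {u, y} \<in> D}"
  by (intro inj_on_finite[of "\<lambda>u. {u, y}" _ D]) (auto simp: inj_on_def doubleton_eq_iff)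

lemma sum_card_incident_le:
  fixes D :: "'a::linorder set set"
  assumes "finite D"
  shows "(\<Sum>y\<in>V. card {u. {u, y} \<in> D}) \<le> 2 * card D"
proof (cases "finite V")
  case True
  have "finite {u. {u, y} \<in> D}" for y
    using assms by (rule finite_incident)
  then have "(\<Sum>y\<in>V. card {u. {u, y} \<in> D}) = card (SIGMA y:V. {u. {u, y} \<in> D})"
    using True by (simp add: card_SigmaI)
  also have "\<dots> \<le> card (D \<times> (UNIV :: bool set))"
    \<comment> \<open>an edge is hit from both of its endpoints, which the order of the pair tells apart\<close>
  proof (rule card_inj_on_le)
    show "inj_on (\<lambda>(y, u). ({u, y}, y < u)) (SIGMA y:V. {u. {u, y} \<in> D})"
      by (auto simp: inj_on_def doubleton_eq_iff)
  qed (use assms in auto)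
  also have "\<dots> = 2 * card D"
    by (simp add: card_cartesian_product)
  finally show ?thesis .
qed simp


section \<open>Messages\<close>

datatype msg = Msg (announce: "(nat \<times> bool) option") (pending: bool) (reply: "bool option")

definition encode_msg :: "nat \<Rightarrow> msg \<Rightarrow> bool list" where
  "encode_msg w m =
     (let (h, b) = case_option (0, False) id (announce m)
      in [announce m \<noteq> None, b, pending m, reply m \<noteq> None, reply m = Some True]
         @ map (bit h) [0..<w])"

definition decode_msg :: "bool list \<Rightarrow> msg" where
  "decode_msg bs =
     Msg (if bs ! 0 then Some (horner_sum of_bool 2 (drop 5 bs), bs ! 1) else None) (bs ! 2)
       (if bs ! 3 then Some (bs ! 4) else None)"

lemma length_encode_msg [simp]: "length (encode_msg w m) = w + 5"
  by (simp add: encode_msg_def split: prod.split)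

lemma decode_encode_msg:
  assumes "\<And>h b. announce m = Some (h, b) \<Longrightarrow> h < 2 ^ w"
  shows "decode_msg (encode_msg w m) = m"
  using assms
  by (cases m) (auto simp: encode_msg_def decode_msg_def horner_sum_bit_eq_take_bit
      take_bit_nat_eq_self split: option.split)


section \<open>The local algorithm\<close>

record local_state =
  nbrs :: "nat set"
  queue :: "nat set"
  announced :: "nat option"
  known :: "nat set \<Rightarrow> bool"
  heard :: "nat \<Rightarrow> nat option"
  consistent :: bool

definition initial_state :: local_state where
  "initial_state = \<lparr>nbrs = {}, queue = {}, announced = None, known = (\<lambda>_. False),
     heard = (\<lambda>_. None), consistent = True\<rparr>"

text \<open>Identifiers \<open>\<ge> n\<close> never occur in a valid topology; ignoring them keeps every announced
  identifier below \<open>n\<close>, so that it fits into \<open>ceillog2 n\<close> bits.\<close>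

definition new_nbrs :: "nat \<Rightarrow> local_state \<Rightarrow> nat set \<times> nat set \<Rightarrow> nat set" where
  "new_nbrs n st nt = (nbrs st - snd nt \<inter> {..<n}) \<union> fst nt \<inter> {..<n}"

definition new_queue :: "nat \<Rightarrow> local_state \<Rightarrow> nat set \<times> nat set \<Rightarrow> nat set" where
  "new_queue n st nt = queue st \<union> (fst nt \<union> snd nt) \<inter> {..<n}"

definition queue_head :: "nat set \<Rightarrow> nat" where
  "queue_head Q = (LEAST h. h \<in> Q)"

definition announcement :: "nat \<Rightarrow> local_state \<Rightarrow> nat set \<times> nat set \<Rightarrow> nat option" where
  "announcement n st nt =
     (let Q = new_queue n st nt in if Q = {} then None else Some (queue_head Q))"

definition rest_queue :: "nat \<Rightarrow> local_state \<Rightarrow> nat set \<times> nat set \<Rightarrow> nat set" where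
  "rest_queue n st nt = (let Q = new_queue n st nt in Q - {queue_head Q})"

definition message :: "nat \<Rightarrow> local_state \<Rightarrow> nat set \<times> nat set \<Rightarrow> nat \<Rightarrow> msg" where
  "message n st nt v =
     Msg (map_option (\<lambda>h. (h, h \<in> new_nbrs n st nt)) (announcement n st nt))
       (rest_queue n st nt \<noteq> {})
       (map_option (\<lambda>w. w \<in> new_nbrs n st nt) (heard st v))"

definition learns :: "local_state \<Rightarrow> (nat \<Rightarrow> msg option) \<Rightarrow> nat set \<Rightarrow> bool \<Rightarrow> bool" where
  "learns st inbox e s \<longleftrightarrow> (\<exists>u m. inbox u = Some m \<and>
      ((\<exists>h. announce m = Some (h, s) \<and> e = {u, h}) \<or>
       (\<exists>w. announced st = Some w \<and> reply m = Some s \<and> e = {u, w})))"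

definition step :: "nat \<Rightarrow> nat set \<times> nat set \<Rightarrow> (nat \<Rightarrow> msg option) \<Rightarrow> local_state \<Rightarrow> local_state" where
  "step n nt inbox st =
     \<lparr>nbrs = new_nbrs n st nt,
      queue = rest_queue n st nt,
      announced = announcement n st nt,
      known = (\<lambda>e. if \<exists>s. learns st inbox e s then (SOME s. learns st inbox e s) else known st e),
        \<comment> \<open>in an actual execution all learned values are correct, see \<open>learns_correct\<close>\<close>
      heard = (\<lambda>u. Option.bind (inbox u) (\<lambda>m. map_option fst (announce m))),
      consistent = (new_queue n st nt = {} \<and>
        (\<forall>u\<in>new_nbrs n st nt. \<exists>m. inbox u = Some m \<and> \<not> pending m))\<rparr>"

definition answer_query :: "nat \<Rightarrow> local_state \<Rightarrow> nat set \<Rightarrow> bool option" where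
  "answer_query x st Q =
     (if consistent st
      then Some (Q - {x} \<subseteq> nbrs st \<and> (\<forall>u\<in>Q - {x}. \<forall>w\<in>Q - {x}. u \<noteq> w \<longrightarrow> known st {u, w}))
      else None)"

lemma queue_head_mem: "Q \<noteq> {} \<Longrightarrow> queue_head Q \<in> Q"
  unfolding queue_head_def by (metis LeastI ex_in_conv)

lemma answer_query_eq_is_clique:
  assumes "x \<in> Q" and "consistent st" and "nbrs st = {u. {u, x} \<in> F}"
    and "\<And>u w. {u, x} \<in> F \<Longrightarrow> {w, x} \<in> F \<Longrightarrow> known st {u, w} = ({u, w} \<in> F)"
  shows "answer_query x st Q = Some (is_clique F Q)"
proof -
  have "Q - {x} \<subseteq> nbrs st \<longleftrightarrow> (\<forall>u\<in>Q - {x}. {u, x} \<in> F)"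
    using assms(3) by auto
  moreover have "(\<forall>u\<in>Q - {x}. \<forall>w\<in>Q - {x}. u \<noteq> w \<longrightarrow> known st {u, w}) \<longleftrightarrow> is_clique F (Q - {x})"
    if "\<forall>u\<in>Q - {x}. {u, x} \<in> F"
    using that assms(4) unfolding is_clique_def by blast
  ultimately show ?thesis
    unfolding answer_query_def is_clique_iff_adjacent[OF assms(1)] using assms(2) by auto
qed


section \<open>Executions\<close>

definition inbox ::
  "nat \<Rightarrow> (nat \<Rightarrow> nat set set) \<Rightarrow> nat \<Rightarrow> (nat \<Rightarrow> local_state) \<Rightarrow> nat \<Rightarrow> nat \<Rightarrow> msg option" where
  "inbox n E t S v u =
     (if u < n \<and> {u, v} \<in> E (Suc t) then Some (message n (S u) (notif E (Suc t) u) v) else None)"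

fun state :: "nat \<Rightarrow> (nat \<Rightarrow> nat set set) \<Rightarrow> nat \<Rightarrow> nat \<Rightarrow> local_state" where
  "state n E 0 v = initial_state"
| "state n E (Suc t) v = step n (notif E (Suc t) v) (inbox n E t (state n E t) v) (state n E t v)"

lemmas state_Suc = state.simps(2)

declare state_Suc [simp del]

definition adj :: "(nat \<Rightarrow> nat set set) \<Rightarrow> nat \<Rightarrow> nat \<Rightarrow> nat set" where
  "adj E t x = {u. {u, x} \<in> E t}"

definition full_queue :: "nat \<Rightarrow> (nat \<Rightarrow> nat set set) \<Rightarrow> nat \<Rightarrow> nat \<Rightarrow> nat set" where
  "full_queue n E t y = new_queue n (state n E t y) (notif E (Suc t) y)"

lemma queue_state_less: "queue (state n E t v) \<subseteq> {..<n}"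
  by (induction t arbitrary: v)
    (auto simp: state_Suc initial_state_def step_def rest_queue_def new_queue_def Let_def)

lemma queue_state_Suc:
  "queue (state n E (Suc t) y) = full_queue n E t y - {queue_head (full_queue n E t y)}"
  by (simp add: state_Suc step_def rest_queue_def full_queue_def Let_def)

lemma announced_state_Suc:
  "announced (state n E (Suc t) y) =
     (if full_queue n E t y = {} then None else Some (queue_head (full_queue n E t y)))"
  by (simp add: state_Suc step_def announcement_def full_queue_def Let_def)

lemma full_queue_popped:
  "z \<in> full_queue n E t y \<Longrightarrow>
     z \<in> queue (state n E (Suc t) y) \<or> announced (state n E (Suc t) y) = Some z"
  by (auto simp: queue_state_Suc announced_state_Suc)

lemma queue_subset_full_queue: "queue (state n E t y) \<subseteq> full_queue n E t y"
  by (auto simp: full_queue_def new_queue_def)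

lemma heard_state_Suc:
  "heard (state n E (Suc t) x) u =
     (if u < n \<and> {u, x} \<in> E (Suc t) then announced (state n E (Suc t) u) else None)"
  by (simp add: state_Suc step_def inbox_def message_def option.map_comp o_def option.map_ident)

lemma heard_state_SomeD:
  "heard (state n E t u) x = Some w \<Longrightarrow> announced (state n E t x) = Some w"
  by (cases t) (auto simp: initial_state_def heard_state_Suc split: if_splits)

lemma known_state_Suc:
  "known (state n E (Suc t) x) e =
     (if \<exists>s. learns (state n E t x) (inbox n E t (state n E t) x) e s
      then SOME s. learns (state n E t x) (inbox n E t (state n E t) x) e s
      else known (state n E t x) e)"
  by (simp add: state_Suc step_def)

definition changed_edges :: "(nat \<Rightarrow> nat set set) \<Rightarrow> nat \<Rightarrow> nat set set" where
  "changed_edges E j = (E j - E (j - 1)) \<union> (E (j - 1) - E j)"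

definition queue_load :: "nat \<Rightarrow> (nat \<Rightarrow> nat set set) \<Rightarrow> nat \<Rightarrow> nat" where
  "queue_load n E t = (\<Sum>y<n. card (queue (state n E t y)))"

lemma full_queue_subset:
  "full_queue n E t y \<subseteq> queue (state n E t y) \<union> {u. {u, y} \<in> changed_edges E (Suc t)}"
  by (auto simp: full_queue_def new_queue_def notif_def changed_edges_def)

lemma card_queue_state_Suc:
  "card (queue (state n E (Suc t) y)) + of_bool (full_queue n E t y \<noteq> {})
     = card (full_queue n E t y)"
proof -
  have "finite (full_queue n E t y)"
    using queue_state_less[of n E t y] finite_subset[of _ "{..<n}"]
    by (auto simp: full_queue_def new_queue_def)
  then show ?thesis
    using queue_head_mem[of "full_queue n E t y"]
    by (cases "full_queue n E t y = {}") (auto simp: queue_state_Suc card_gt_0_iff)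
qed


section \<open>Implementation in the network model\<close>

type_synonym observation = "nat list \<times> nat list \<times> bool list option list"

definition observe :: "nat \<Rightarrow> nat set \<times> nat set \<Rightarrow> (nat \<Rightarrow> bool list option) \<Rightarrow> observation" where
  "observe n nt r =
     (filter (\<lambda>u. u \<in> fst nt) [0..<n], filter (\<lambda>u. u \<in> snd nt) [0..<n], map r [0..<n])"

definition replay_step :: "nat \<Rightarrow> local_state \<Rightarrow> observation \<Rightarrow> local_state" where
  "replay_step n st ob = (case ob of (Is, Ds, rs) \<Rightarrow>
     step n (set Is, set Ds) (\<lambda>u. if u < n then map_option decode_msg (rs ! u) else None) st)"

definition history :: "nat list \<Rightarrow> observation list" where
  "history s = from_nat (s ! 1)"

definition replay :: "nat \<Rightarrow> nat list \<Rightarrow> local_state" where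
  "replay n s = foldl (replay_step n) initial_state (history s)"

text \<open>The model only allows lists of naturals as local states.  A node stores its identifier and
  a code of its whole history of observations, from which it recomputes its \<^typ>\<open>local_state\<close>.\<close>

definition clique_alg :: "nat \<Rightarrow> alg" where
  "clique_alg n =
     \<lparr>init = (\<lambda>v. [v, to_nat ([] :: observation list)]),
      send_msg = (\<lambda>s nt u. encode_msg (ceillog2 n) (message n (replay n s) nt u)),
      update = (\<lambda>s nt r. [s ! 0, to_nat (history s @ [observe n nt r])]),
      answer = (\<lambda>s. answer_query (s ! 0) (replay n s))\<rparr>"

lemma clique_alg_simps [simp]:
  "init (clique_alg n) v = [v, to_nat ([] :: observation list)]"
  "send_msg (clique_alg n) s nt u = encode_msg (ceillog2 n) (message n (replay n s) nt u)"
  "update (clique_alg n) s nt r = [s ! 0, to_nat (history s @ [observe n nt r])]"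
  "answer (clique_alg n) s = answer_query (s ! 0) (replay n s)"
  by (simp_all add: clique_alg_def)

lemma announce_message_less:
  assumes "queue st \<subseteq> {..<n}" and "announce (message n st nt v) = Some (h, b)"
  shows "h < n"
  using assms queue_head_mem[of "new_queue n st nt"]
  by (auto simp: message_def announcement_def new_queue_def Let_def split: if_splits)

lemma step_restrict_ids: "step n (I \<inter> {..<n}, D \<inter> {..<n}) = step n (I, D)"
proof -
  have "new_nbrs n st (I \<inter> {..<n}, D \<inter> {..<n}) = new_nbrs n st (I, D)"
    and "new_queue n st (I \<inter> {..<n}, D \<inter> {..<n}) = new_queue n st (I, D)" for st
    by (auto simp: new_nbrs_def new_queue_def)
  then show ?thesis
    by (intro ext) (simp add: step_def announcement_def rest_queue_def)
qed

lemma run_clique_alg: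
  "run (clique_alg n) n E t v ! 0 = v \<and> replay n (run (clique_alg n) n E t v) = state n E t v"
proof (induction t arbitrary: v)
  case 0
  show ?case by (simp add: replay_def history_def)
next
  case (Suc t)
  define r where "r u = (if u < n \<and> {u, v} \<in> E (Suc t)
    then Some (send_msg (clique_alg n) (run (clique_alg n) n E t u) (notif E (Suc t) u) v)
    else None)" for u
  have decoded: "(\<lambda>u. if u < n then map_option decode_msg (map r [0..<n] ! u) else None)
      = inbox n E t (state n E t) v"
  proof
    fix u
    have "decode_msg (encode_msg (ceillog2 n) (message n (state n E t u) (notif E (Suc t) u) v))
        = message n (state n E t u) (notif E (Suc t) u) v"
      using announce_message_less[OF queue_state_less] le_two_power_ceillog2[of n]
      by (intro decode_encode_msg) (meson less_le_trans)
    then show "(if u < n then map_option decode_msg (map r [0..<n] ! u) else None)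
        = inbox n E t (state n E t) v u"
      using Suc.IH by (simp add: r_def inbox_def)
  qed
  have "set (filter (\<lambda>u. u \<in> X) [0..<n]) = X \<inter> {..<n}" for X
    by auto
  then have "replay n (run (clique_alg n) n E (Suc t) v)
      = step n (notif E (Suc t) v) (inbox n E t (state n E t) v) (state n E t v)"
    using Suc.IH[of v] decoded
    by (simp add: replay_def history_def replay_step_def observe_def step_restrict_ids state_Suc
        flip: r_def)
  then show ?case
    using Suc.IH[of v] by (simp add: state_Suc)
qed

lemma answer_run_clique_alg:
  "answer (clique_alg n) (run (clique_alg n) n E t v) = answer_query v (state n E t v)"
  using run_clique_alg[of n E t v] by simp

lemma msg_bounded_clique_alg:
  assumes "n \<ge> 2"
  shows "msg_bounded 6 n (clique_alg n)"
proof -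
  have "1 \<le> ceillog2 n"
    using assms ceillog2_ge_iff[of n 1] by simp
  moreover have "ceillog2 n = nat \<lceil>log 2 (real n)\<rceil>"
    using assms by (simp add: ceillog2_def)
  ultimately show ?thesis
    by (simp add: msg_bounded_def)
qed


section \<open>Correctness and amortized complexity\<close>

definition outstanding :: "local_state \<Rightarrow> nat \<Rightarrow> bool" where
  "outstanding st u \<longleftrightarrow> u \<in> queue st \<or> announced st = Some u"

definition edge_known_or_pending ::
  "nat \<Rightarrow> (nat \<Rightarrow> nat set set) \<Rightarrow> nat \<Rightarrow> nat \<Rightarrow> nat \<Rightarrow> nat \<Rightarrow> bool" where
  "edge_known_or_pending n E t x u v \<longleftrightarrow>
     known (state n E t x) {u, v} = ({u, v} \<in> E t) \<or>
     v \<in> queue (state n E t u) \<or> u \<in> queue (state n E t v) \<or>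
     outstanding (state n E t x) u \<or> outstanding (state n E t x) v"

lemma edge_known_or_pending_commute:
  "edge_known_or_pending n E t x u v = edge_known_or_pending n E t x v u"
  by (auto simp: edge_known_or_pending_def insert_commute)

context
  fixes n :: nat and E :: "nat \<Rightarrow> nat set set"
  assumes topology: "valid_topology n E"
begin

lemma edge_nodes: "{u, x} \<in> E t \<Longrightarrow> u < n \<and> x < n \<and> u \<noteq> x"
proof -
  assume "{u, x} \<in> E t"
  then obtain a b where "{u, x} = {a, b}" "a < n" "b < n" "a \<noteq> b"
    using topology unfolding valid_topology_def by blast
  then show ?thesis
    by (auto simp: doubleton_eq_iff)
qed

lemma no_initial_edges: "E 0 = {}"
  using topology unfolding valid_topology_def by blast

lemma nbrs_state: "nbrs (state n E t x) = adj E t x"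
proof (induction t)
  case 0
  then show ?case by (simp add: initial_state_def adj_def no_initial_edges)
next
  case (Suc t)
  then show ?case
    by (auto simp: state_Suc step_def new_nbrs_def notif_def adj_def dest: edge_nodes)
qed

lemma changed_edge_in_full_queue:
  "({z, y} \<in> E (Suc t)) \<noteq> ({z, y} \<in> E t) \<Longrightarrow> z \<in> full_queue n E t y"
  by (auto simp: full_queue_def new_queue_def notif_def dest: edge_nodes)

lemma heard_state_if_edge:
  "{x, v} \<in> E t \<Longrightarrow> heard (state n E t v) x = announced (state n E t x)"
  by (cases t) (auto simp: no_initial_edges heard_state_Suc dest: edge_nodes)

lemma learns_correct:
  assumes "learns (state n E t x) (inbox n E t (state n E t) x) e s"
  shows "s = (e \<in> E (Suc t))"
proof -
  obtain u m where "inbox n E t (state n E t) x u = Some m"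
    and learned: "(\<exists>h. announce m = Some (h, s) \<and> e = {u, h}) \<or>
       (\<exists>w. announced (state n E t x) = Some w \<and> reply m = Some s \<and> e = {u, w})"
    using assms unfolding learns_def by blast
  then have m: "m = message n (state n E t u) (notif E (Suc t) u) x"
    by (simp add: inbox_def split: if_splits)
  have nbrs_u: "new_nbrs n (state n E t u) (notif E (Suc t) u) = adj E (Suc t) u"
    using nbrs_state[of "Suc t" u] by (simp add: state_Suc step_def)
  from learned show ?thesis
  proof
    assume "\<exists>h. announce m = Some (h, s) \<and> e = {u, h}"
    then show ?thesis
      using m nbrs_u by (auto simp: message_def adj_def insert_commute)
  next
    assume "\<exists>w. announced (state n E t x) = Some w \<and> reply m = Some s \<and> e = {u, w}"
    then obtain w where "announced (state n E t x) = Some w" "reply m = Some s" "e = {u, w}"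
      by blast
    moreover from this m obtain w' where "heard (state n E t u) x = Some w'"
      and "s = (w' \<in> adj E (Suc t) u)"
      using nbrs_u by (auto simp: message_def)
    ultimately show ?thesis
      using heard_state_SomeD by (fastforce simp: adj_def insert_commute)
  qed
qed

lemma known_state_Suc_if_learns:
  assumes "\<exists>s. learns (state n E t x) (inbox n E t (state n E t) x) e s"
  shows "known (state n E (Suc t) x) e = (e \<in> E (Suc t))"
  using someI_ex[OF assms] assms learns_correct by (simp add: known_state_Suc)

lemma known_state_Suc_if_stable:
  assumes "known (state n E t x) e = (e \<in> E t)" and "(e \<in> E (Suc t)) = (e \<in> E t)"
  shows "known (state n E (Suc t) x) e = (e \<in> E (Suc t))"
  using assms known_state_Suc_if_learns by (auto simp: known_state_Suc)

lemma learns_announcement: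
  assumes "{u, x} \<in> E (Suc t)" and "announced (state n E (Suc t) u) = Some v"
  shows "\<exists>s. learns (state n E t x) (inbox n E t (state n E t) x) {u, v} s"
  using assms edge_nodes[OF assms(1)]
  by (auto simp: learns_def inbox_def message_def state_Suc step_def)

lemma learns_reply:
  assumes "{v, x} \<in> E (Suc t)" and "{x, v} \<in> E t" and "announced (state n E t x) = Some u"
  shows "\<exists>s. learns (state n E t x) (inbox n E t (state n E t) x) {v, u} s"
  using assms edge_nodes[OF assms(1)] heard_state_if_edge[OF assms(2)]
  by (auto simp: learns_def inbox_def message_def)

lemma edge_known_or_pending_if_learns:
  assumes "\<exists>s. learns (state n E t x) (inbox n E t (state n E t) x) {u, v} s"
  shows "edge_known_or_pending n E (Suc t) x u v"
  using known_state_Suc_if_learns[OF assms] by (simp add: edge_known_or_pending_def)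

lemma edge_known_or_pending_if_queued:
  assumes "{u, x} \<in> E (Suc t)" and "v \<in> full_queue n E t u"
  shows "edge_known_or_pending n E (Suc t) x u v"
  using full_queue_popped[OF assms(2)]
proof
  assume "announced (state n E (Suc t) u) = Some v"
  then show ?thesis
    using learns_announcement[OF assms(1)] edge_known_or_pending_if_learns by blast
qed (simp add: edge_known_or_pending_def)

lemma edge_known_or_pending_if_outstanding:
  "u \<in> full_queue n E t x \<Longrightarrow> edge_known_or_pending n E (Suc t) x u v"
  using full_queue_popped by (auto simp: edge_known_or_pending_def outstanding_def)

lemma edge_known_or_pending_Suc_one_side:
  assumes "{u, x} \<in> E (Suc t)" and "{v, x} \<in> E (Suc t)" and "{v, x} \<in> E t"
    and "v \<in> queue (state n E t u) \<or> outstanding (state n E t x) u"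
  shows "edge_known_or_pending n E (Suc t) x u v"
  using assms(4) unfolding outstanding_def
proof (elim disjE)
  assume "v \<in> queue (state n E t u)"
  then show ?thesis
    using assms(1) queue_subset_full_queue edge_known_or_pending_if_queued by blast
next
  assume "u \<in> queue (state n E t x)"
  then show ?thesis
    using queue_subset_full_queue edge_known_or_pending_if_outstanding by blast
next
  assume "announced (state n E t x) = Some u"
  then have "\<exists>s. learns (state n E t x) (inbox n E t (state n E t) x) {v, u} s"
    using assms(2,3) by (intro learns_reply) (simp_all add: insert_commute)
  then show ?thesis
    using edge_known_or_pending_if_learns edge_known_or_pending_commute by blast
qed

lemma edge_known_or_pending_Suc_stable:
  assumes "{u, x} \<in> E (Suc t)" and "{v, x} \<in> E (Suc t)"
    and "{u, x} \<in> E t" and "{v, x} \<in> E t" and "({u, v} \<in> E (Suc t)) = ({u, v} \<in> E t)"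
    and "edge_known_or_pending n E t x u v"
  shows "edge_known_or_pending n E (Suc t) x u v"
proof -
  consider "known (state n E t x) {u, v} = ({u, v} \<in> E t)"
    | "v \<in> queue (state n E t u) \<or> outstanding (state n E t x) u"
    | "u \<in> queue (state n E t v) \<or> outstanding (state n E t x) v"
    using assms(6) unfolding edge_known_or_pending_def by blast
  then show ?thesis
  proof cases
    case 1
    then show ?thesis
      using known_state_Suc_if_stable assms(5) by (simp add: edge_known_or_pending_def)
  next
    case 2
    then show ?thesis
      using edge_known_or_pending_Suc_one_side assms(1,2,4) by blast
  next
    case 3
    then show ?thesis
      using edge_known_or_pending_Suc_one_side assms(1-3) edge_known_or_pending_commute by metis
  qed
qed

lemma edge_known_or_pending_if_adjacent:
  "{u, x} \<in> E t \<Longrightarrow> {v, x} \<in> E t \<Longrightarrow> edge_known_or_pending n E t x u v"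
proof (induction t)
  case 0
  then show ?case by (simp add: no_initial_edges)
next
  case (Suc t)
  consider (u_changed) "{u, x} \<notin> E t" | (v_changed) "{v, x} \<notin> E t"
    | (uv_changed) "({u, v} \<in> E (Suc t)) \<noteq> ({u, v} \<in> E t)"
    | (stable) "{u, x} \<in> E t" "{v, x} \<in> E t" "({u, v} \<in> E (Suc t)) = ({u, v} \<in> E t)"
    by blast
  then show ?case
  proof cases
    case u_changed
    then show ?thesis
      using Suc.prems changed_edge_in_full_queue edge_known_or_pending_if_outstanding by blast
  next
    case v_changed
    then show ?thesis
      using Suc.prems changed_edge_in_full_queue edge_known_or_pending_if_outstanding
        edge_known_or_pending_commute by metis
  next
    case uv_changed
    then have "v \<in> full_queue n E t u"
      by (intro changed_edge_in_full_queue) (simp add: insert_commute)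
    then show ?thesis
      using Suc.prems edge_known_or_pending_if_queued by blast
  next
    case stable
    show ?thesis
      using edge_known_or_pending_Suc_stable[OF Suc.prems stable Suc.IH[OF stable(1,2)]] .
  qed
qed

lemma consistent_state_Suc:
  "consistent (state n E (Suc t) x) \<longleftrightarrow>
     full_queue n E t x = {} \<and> (\<forall>u\<in>adj E (Suc t) x. queue (state n E (Suc t) u) = {})"
proof -
  have "new_nbrs n (state n E t x) (notif E (Suc t) x) = adj E (Suc t) x"
    using nbrs_state[of "Suc t" x] by (simp add: state_Suc step_def)
  moreover have "inbox n E t (state n E t) x u =
      Some (message n (state n E t u) (notif E (Suc t) u) x)" if "u \<in> adj E (Suc t) x" for u
    using that edge_nodes by (auto simp: inbox_def adj_def)
  ultimately show ?thesis
    by (simp add: state_Suc step_def full_queue_def message_def rest_queue_def Let_def)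
qed

lemma answer_query_state:
  assumes "x \<in> Q" and "consistent (state n E (Suc t) x)"
  shows "answer_query x (state n E (Suc t) x) Q = Some (is_clique (E (Suc t)) Q)"
proof (rule answer_query_eq_is_clique)
  have empty: "queue (state n E (Suc t) x) = {}" "announced (state n E (Suc t) x) = None"
    "\<And>u. {u, x} \<in> E (Suc t) \<Longrightarrow> queue (state n E (Suc t) u) = {}"
    using assms(2) unfolding consistent_state_Suc
    by (auto simp: queue_state_Suc announced_state_Suc adj_def)
  show "known (state n E (Suc t) x) {u, w} = ({u, w} \<in> E (Suc t))"
    if "{u, x} \<in> E (Suc t)" and "{w, x} \<in> E (Suc t)" for u w
    using edge_known_or_pending_if_adjacent[OF that] empty that
    by (simp add: edge_known_or_pending_def outstanding_def)
qed (use assms nbrs_state in \<open>simp_all add: adj_def\<close>)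

lemma full_queue_nonempty_if_inconsistent:
  assumes "\<not> consistent (state n E (Suc t) x)" and "x < n"
  shows "\<exists>y<n. full_queue n E t y \<noteq> {}"
proof (cases "full_queue n E t x = {}")
  case True
  then obtain u where "{u, x} \<in> E (Suc t)" and "queue (state n E (Suc t) u) \<noteq> {}"
    using assms(1) consistent_state_Suc by (auto simp: adj_def)
  moreover from this have "full_queue n E t u \<noteq> {}"
    by (auto simp: queue_state_Suc)
  ultimately show ?thesis
    using edge_nodes by blast
qed (use assms(2) in blast)

lemma finite_changed_edges: "finite (changed_edges E j)"
proof -
  have "E t \<subseteq> (\<lambda>(u, v). {u, v}) ` ({..<n} \<times> {..<n})" for t
    using topology unfolding valid_topology_def by fastforce
  then have "finite (E t)" for t
    by (rule finite_subset) auto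
  then show ?thesis
    by (simp add: changed_edges_def)
qed

lemma queue_load_Suc:
  "queue_load n E (Suc t) + of_bool (\<exists>y<n. full_queue n E t y \<noteq> {})
     \<le> queue_load n E t + 2 * card (changed_edges E (Suc t))"
proof -
  have "of_bool (\<exists>y<n. full_queue n E t y \<noteq> {}) \<le> (\<Sum>y<n. of_bool (full_queue n E t y \<noteq> {}) :: nat)"
    by (auto simp: Suc_le_eq card_gt_0_iff)
  then have "queue_load n E (Suc t) + of_bool (\<exists>y<n. full_queue n E t y \<noteq> {})
      \<le> (\<Sum>y<n. card (queue (state n E (Suc t) y)) + of_bool (full_queue n E t y \<noteq> {}))"
    by (simp add: queue_load_def sum.distrib del: sum_of_bool_eq)
  also have "\<dots> = (\<Sum>y<n. card (full_queue n E t y))"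
    by (simp only: card_queue_state_Suc)
  also have "\<dots> \<le> (\<Sum>y<n. card (queue (state n E t y)) + card {u. {u, y} \<in> changed_edges E (Suc t)})"
    using full_queue_subset finite_incident[OF finite_changed_edges]
      finite_subset[OF queue_state_less]
    by (intro sum_mono order.trans[OF card_mono card_Un_le]) auto
  also have "\<dots> \<le> queue_load n E t + 2 * card (changed_edges E (Suc t))"
    using sum_card_incident_le[OF finite_changed_edges] by (simp add: queue_load_def sum.distrib)
  finally show ?thesis .
qed

lemma inconsistent_rounds_le:
  "card {j \<in> {1..i}. inconsistent_round k n (clique_alg n) E j} \<le> 2 * num_changes E i"
  unfolding num_changes_def changed_edges_def[symmetric]
proof (rule card_le_by_potential[where \<Phi> = "queue_load n E"])
  show "queue_load n E 0 = 0"
    by (simp add: queue_load_def initial_state_def)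
  fix t
  have "\<exists>y<n. full_queue n E t y \<noteq> {}" if "inconsistent_round k n (clique_alg n) E (Suc t)"
  proof -
    from that obtain v Q where "valid_query k n v Q"
      and "answer_query v (state n E (Suc t) v) Q = None"
      unfolding inconsistent_round_def answer_run_clique_alg by blast
    then show ?thesis
      using full_queue_nonempty_if_inconsistent
      by (auto simp: answer_query_def valid_query_def split: if_splits)
  qed
  then show "queue_load n E (Suc t) + of_bool (inconsistent_round k n (clique_alg n) E (Suc t))
      \<le> queue_load n E t + 2 * card (changed_edges E (Suc t))"
    using queue_load_Suc[of t] by (auto split: if_splits)
qed

end

lemma clique_correct_clique_alg: "clique_correct k n (clique_alg n)"
  unfolding clique_correct_def
proof (intro allI impI)
  fix E i v Q b
  assume "valid_topology n E" and "1 \<le> i" and "valid_query k n v Q"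
    and "answer (clique_alg n) (run (clique_alg n) n E i v) Q = Some b"
  then show "b = is_clique (E i) Q"
    unfolding answer_run_clique_alg using answer_query_state[of n E v Q "i - 1"]
    by (auto simp: answer_query_def valid_query_def split: if_splits)
qed

lemma amortized_bound_clique_alg: "amortized_bound 2 k n (clique_alg n)"
  unfolding amortized_bound_def
proof (intro allI impI)
  fix E i
  assume "valid_topology n E"
  then have "real (card {j \<in> {1..i}. inconsistent_round k n (clique_alg n) E j})
      \<le> real (2 * num_changes E i)"
    by (intro of_nat_mono inconsistent_rounds_le)
  then show "real (card {j \<in> {1..i}. inconsistent_round k n (clique_alg n) E j})
      \<le> 2 * real (num_changes E i)"
    by simp
qed

definition silent_alg :: alg where
  "silent_alg = \<lparr>init = (\<lambda>_. []), send_msg = (\<lambda>_ _ _. []), update = (\<lambda>_ _ _. []),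
     answer = (\<lambda>_ _. None)\<rparr>"

theorem corollary2:
  fixes k :: nat
  assumes "k \<ge> 3"
  shows "\<exists>(c::real) (B::nat). \<forall>n. \<exists>A. msg_bounded B n A \<and> clique_correct k n A
            \<and> amortized_bound c k n A"
proof -
  have "\<exists>A. msg_bounded 6 n A \<and> clique_correct k n A \<and> amortized_bound 2 k n A" for n
  proof (cases "n \<ge> 2")
    case True
    then show ?thesis
      using msg_bounded_clique_alg clique_correct_clique_alg amortized_bound_clique_alg by blast
  next
    case False
    \<comment> \<open>the bit bound forces empty messages, but as \<open>k \<ge> 3\<close> there are no valid queries either\<close>
    then have "\<not> valid_query k n v Q" for v Q
      using assms valid_query_card_le by fastforce
    then show ?thesis
      by (intro exI[of _ silent_alg])
        (auto simp: silent_alg_def msg_bounded_def clique_correct_def amortized_bound_def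
          inconsistent_round_def)
  qed
  then show ?thesis
    by blast
qed

end
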